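(* Let $\overline{P}$ be a Preparata code of length $n$, let $x\in\overline{P}$, let $m,l,k\in\mathrm{supp}(x)$, and let $u,v$ be distinct codewords of $\overline{P}$, both at Hamming distance $6$ from $x$ and both having zeros in positions $m,l,k$. Then there is no coordinate in $\mathrm{supp}(x)\setminus\{m,l,k\}$ in which both $u$ and $v$ are zero, and there is no coordinate in $\{1,\ldots,n\}\setminus\mathrm{supp}(x)$ in which both $u$ and $v$ are one.
   Context: $E^n$ is the set of binary vectors of length $n$ with the Hamming distance; $\mathrm{supp}(x)=\{k:x_k=1\}$. A Preparata code is a binary code of length $n=2^m$ ($m\ge 4$ even) with minimum distance $6$ and maximum possible cardinality among binary codes of that length and minimum distance. *)

theory Defs
  imports Main
begin

text \<open>Binary vectors of length n are modelled as boolean lists of length n;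
  coordinates are indexed 0..n-1 (the paper uses 1..n).\<close>

definition E :: "nat \<Rightarrow> bool list set" where
  "E n = {x. length x = n}"

definition hdist :: "bool list \<Rightarrow> bool list \<Rightarrow> nat" where
  "hdist x y = card {i. i < length x \<and> x ! i \<noteq> y ! i}"

definition supp :: "bool list \<Rightarrow> nat set" where
  "supp x = {k. k < length x \<and> x ! k}"

definition is_code :: "nat \<Rightarrow> nat \<Rightarrow> bool list set \<Rightarrow> bool" where
  "is_code n d C \<longleftrightarrow> C \<subseteq> E n
     \<and> (\<forall>x\<in>C. \<forall>y\<in>C. x \<noteq> y \<longrightarrow> d \<le> hdist x y)
     \<and> (\<exists>x\<in>C. \<exists>y\<in>C. x \<noteq> y \<and> hdist x y = d)"

definition preparata :: "nat \<Rightarrow> bool list set \<Rightarrow> bool" where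
  "preparata n C \<longleftrightarrow> (\<exists>m. even m \<and> m \<ge> 4 \<and> n = 2 ^ m)
     \<and> is_code n 6 C
     \<and> (\<forall>C'. is_code n 6 C' \<longrightarrow> card C' \<le> card C)"

end

theory Submission
  imports Defs
begin

text \<open>Positions where both u and v differ from x are positions where u and v agree (the
  alphabet is binary). Four such positions are the zeros of u and v at m, l, k together with
  the offending coordinate j, so two words at distance 6 from x would be at distance at most
  6 + 6 - 2 * 4 = 4 from each other, contradicting minimum distance 6.\<close>

lemma hdist_add_common_diffs_le:
  fixes x u v :: "bool list" and S :: "nat set"
  assumes len: "length u = length x" "length v = length x"
    and S: "S \<subseteq> {i. i < length x \<and> x ! i \<noteq> u ! i \<and> x ! i \<noteq> v ! i}"
  shows "hdist u v + 2 * card S \<le> hdist x u + hdist x v"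
proof -
  define Du where "Du = {i. i < length x \<and> x ! i \<noteq> u ! i}"
  define Dv where "Dv = {i. i < length x \<and> x ! i \<noteq> v ! i}"
  have fin: "finite Du" "finite Dv" "finite S"
    using S by (auto simp: Du_def Dv_def intro: finite_subset)
  have SDu: "S \<subseteq> Du" and SDv: "S \<subseteq> Dv"
    using S by (auto simp: Du_def Dv_def)
  have "{i. i < length u \<and> u ! i \<noteq> v ! i} \<subseteq> (Du - S) \<union> (Dv - S)"
    using S len by (auto simp: Du_def Dv_def)
  then have "hdist u v \<le> card ((Du - S) \<union> (Dv - S))"
    unfolding hdist_def using fin by (intro card_mono) auto
  also have "\<dots> \<le> card (Du - S) + card (Dv - S)"
    by (rule card_Un_le)
  also have "\<dots> = (card Du - card S) + (card Dv - card S)"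
    using fin SDu SDv by (simp add: card_Diff_subset)
  finally show ?thesis
    using card_mono[OF fin(1) SDu] card_mono[OF fin(2) SDv]
    by (simp add: hdist_def Du_def Dv_def)
qed

lemma is_code_length:
  assumes "is_code n d C" "u \<in> C"
  shows "length u = n"
  using assms by (auto simp: is_code_def E_def)

lemma is_code_hdist_ge:
  assumes "is_code n d C" "u \<in> C" "v \<in> C" "u \<noteq> v"
  shows "d \<le> hdist u v"
  using assms by (auto simp: is_code_def)

theorem lemma7:
  fixes n :: nat and P :: "bool list set" and x u v :: "bool list" and m l k :: nat
  assumes "preparata n P"
    and "x \<in> P"
    and "m \<in> supp x" "l \<in> supp x" "k \<in> supp x"
    and "m \<noteq> l" "m \<noteq> k" "l \<noteq> k"
    and "u \<in> P" "v \<in> P" "u \<noteq> v"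
    and "hdist x u = 6" "hdist x v = 6"
    and "\<not> u ! m" "\<not> u ! l" "\<not> u ! k"
    and "\<not> v ! m" "\<not> v ! l" "\<not> v ! k"
  shows "\<not> (\<exists>j \<in> supp x - {m, l, k}. \<not> u ! j \<and> \<not> v ! j)
     \<and> \<not> (\<exists>j \<in> {0..<n} - supp x. u ! j \<and> v ! j)"
proof -
  have code: "is_code n 6 P"
    using assms(1) by (simp add: preparata_def)
  have len: "length x = n" "length u = n" "length v = n"
    using code assms(2,9,10) by (auto intro: is_code_length)
  have "False" if j: "j < n" "j \<notin> {m, l, k}" "x ! j \<noteq> u ! j" "x ! j \<noteq> v ! j" for j
  proof -
    have "{m, l, k, j} \<subseteq> {i. i < length x \<and> x ! i \<noteq> u ! i \<and> x ! i \<noteq> v ! i}"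
      using assms(3-5,14-19) j len by (auto simp: supp_def)
    from hdist_add_common_diffs_le[OF _ _ this] len
    have "hdist u v + 2 * card {m, l, k, j} \<le> 12"
      using assms(12,13) by simp
    moreover have "card {m, l, k, j} = 4"
      using j assms(6-8) by auto
    ultimately show False
      using is_code_hdist_ge[OF code assms(9-11)] by simp
  qed
  then show ?thesis
    using len assms(3-5) by (fastforce simp: supp_def)
qed

end
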